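(* Let $\mathcal G_n=\{x_{i,n}\}_{i=1,\ldots,d_n}$ be an asymptotically uniform grid in $[a,b]$ with $d_n\to\infty$, and let $\mathcal G_n'=\{x'_{i,n}\}_{i=1,\ldots,d'_n}$ be a sequence of $d_n'$ real points such that $\mathcal G_n'\subset[a-\epsilon_n,b+\epsilon_n]$ for some $\epsilon_n\to0$ and $|\mathcal G_n\triangle\mathcal G_n'|=o(d_n)$ as $n\to\infty$. Then $d_n'/d_n\to1$ as $n\to\infty$, and $\mathcal G_n'$, with its points rearranged in increasing order, is an asymptotically uniform grid in $[a,b]$.
   Context: A sequence of points $\{x_{i,n}\}_{i=1,\ldots,m_n}$ is an asymptotically uniform grid in $[a,b]$ if $\max_{i=1,\ldots,m_n}|x_{i,n}-(a+i(b-a)/m_n)|\to0$. The sequences of points $\mathcal G_n,\mathcal G_n'$ are regarded as finite multisets, and $\mathcal G_n\triangle\mathcal G_n'=(\mathcal G_n\setminus\mathcal G_n')\cup(\mathcal G_n'\setminus\mathcal G_n)$ is the multiset symmetric difference (counting multiplicities). *)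

theory Defs
  imports "HOL-Analysis.Analysis" "HOL-Library.Multiset" "HOL-Library.Landau_Symbols"
begin

definition asymp_uniform_grid ::
  "(nat \<Rightarrow> nat \<Rightarrow> real) \<Rightarrow> (nat \<Rightarrow> nat) \<Rightarrow> real \<Rightarrow> real \<Rightarrow> bool" where
  "asymp_uniform_grid x m a b \<longleftrightarrow>
     (\<forall>e>0. eventually (\<lambda>n. \<forall>i\<in>{1..m n}.
         \<bar>x n i - (a + real i * (b - a) / real (m n))\<bar> < e) sequentially)"

definition grid_mset :: "(nat \<Rightarrow> nat \<Rightarrow> real) \<Rightarrow> (nat \<Rightarrow> nat) \<Rightarrow> nat \<Rightarrow> real multiset" where
  "grid_mset x m n = image_mset (x n) (mset_set {1..m n})"

definition mset_symdiff :: "'a multiset \<Rightarrow> 'a multiset \<Rightarrow> 'a multiset" where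
  "mset_symdiff A B = (A - B) + (B - A)"

definition sorted_grid :: "(nat \<Rightarrow> nat \<Rightarrow> real) \<Rightarrow> (nat \<Rightarrow> nat) \<Rightarrow> nat \<Rightarrow> nat \<Rightarrow> real" where
  "sorted_grid x m n i = sort (map (x n) [1..<m n + 1]) ! (i - 1)"

end

(* Write N(t) and N'(t) for the number of points <= t of the two grids and D for the size of
   their symmetric difference.  Then |N - N'| <= D, in particular |d - d'| <= D = o(d), which
   gives d'/d -> 1.  The k-th smallest point y of G' is characterised by y <= t <-> k <= N'(t).
   Since G deviates by less than delta from the uniform grid of step h = (b - a)/d, N(t) >= j as
   soon as t >= a + j h + delta, and N(t) < j as soon as t <= a + j h - delta.  Passing to N'
   at the cost of D, or using G' in [a - eps, b + eps] when k is within D of either end, gives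
   |y - (a + k (b - a)/d')| <= max delta eps + 2 D h, and D h -> 0. *)

theory Submission
  imports Defs
begin

definition grid_count :: "(nat \<Rightarrow> nat \<Rightarrow> real) \<Rightarrow> (nat \<Rightarrow> nat) \<Rightarrow> nat \<Rightarrow> real \<Rightarrow> nat" where
  "grid_count x m n t = size (filter_mset (\<lambda>y. y \<le> t) (grid_mset x m n))"

lemma mset_symdiff_commute: "mset_symdiff A B = mset_symdiff B A"
  by (simp add: mset_symdiff_def add.commute)

lemma size_filter_mset_le_symdiff:
  "size (filter_mset P A) \<le> size (filter_mset P B) + size (mset_symdiff A B)"
proof -
  have "A \<subseteq># (A - B) + B"
    using subset_eq_diff_conv by blast
  then have "filter_mset P A \<subseteq># filter_mset P (A - B) + filter_mset P B"
    by (metis multiset_filter_mono filter_union_mset)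
  then have "size (filter_mset P A) \<le> size (filter_mset P (A - B)) + size (filter_mset P B)"
    using size_mset_mono by fastforce
  also have "\<dots> \<le> size (A - B) + size (filter_mset P B)"
    by (rule add_right_mono, rule size_filter_mset_lesseq)
  finally show ?thesis
    by (simp add: mset_symdiff_def)
qed

lemma abs_size_diff_le_symdiff:
  "\<bar>real (size A) - real (size B)\<bar> \<le> real (size (mset_symdiff A B))"
  using size_filter_mset_le_symdiff[of "\<lambda>_. True" A B]
    size_filter_mset_le_symdiff[of "\<lambda>_. True" B A]
  by (simp add: mset_symdiff_commute[of B A])

lemma sorted_nth_le_iff_length_filter:
  fixes ys :: "'a::linorder list"
  assumes "sorted ys" and "k < length ys"
  shows "ys ! k \<le> t \<longleftrightarrow> k < length (filter (\<lambda>y. y \<le> t) ys)"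
proof
  assume "ys ! k \<le> t"
  have "{..k} \<subseteq> {i. i < length ys \<and> ys ! i \<le> t}"
  proof
    fix i assume "i \<in> {..k}"
    then have "i < length ys" and "ys ! i \<le> ys ! k"
      using assms sorted_nth_mono by auto
    with \<open>ys ! k \<le> t\<close> show "i \<in> {i. i < length ys \<and> ys ! i \<le> t}"
      by simp
  qed
  then have "card {..k} \<le> card {i. i < length ys \<and> ys ! i \<le> t}"
    by (intro card_mono) auto
  then show "k < length (filter (\<lambda>y. y \<le> t) ys)"
    by (simp add: length_filter_conv_card)
next
  assume less: "k < length (filter (\<lambda>y. y \<le> t) ys)"
  show "ys ! k \<le> t"
  proof (rule ccontr)
    assume "\<not> ys ! k \<le> t"
    have "{i. i < length ys \<and> ys ! i \<le> t} \<subseteq> {..<k}"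
    proof
      fix i assume i: "i \<in> {i. i < length ys \<and> ys ! i \<le> t}"
      show "i \<in> {..<k}"
      proof (rule ccontr)
        assume "i \<notin> {..<k}"
        then have "ys ! k \<le> ys ! i"
          using sorted_nth_mono[OF assms(1), of k i] i by simp
        with i \<open>\<not> ys ! k \<le> t\<close> show False
          by (auto dest: order_trans)
      qed
    qed
    then have "card {i. i < length ys \<and> ys ! i \<le> t} \<le> k"
      using card_mono[of "{..<k}"] by fastforce
    with less show False
      by (simp add: length_filter_conv_card)
  qed
qed

lemma size_grid_mset [simp]: "size (grid_mset x m n) = m n"
  by (simp add: grid_mset_def)

lemma abs_grid_size_diff_le_symdiff:
  "\<bar>real (d' n) - real (d n)\<bar> \<le> real (size (mset_symdiff (grid_mset x d n) (grid_mset x' d' n)))"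
  using abs_size_diff_le_symdiff[of "grid_mset x' d' n" "grid_mset x d n"]
  by (simp add: mset_symdiff_commute)

lemma grid_count_eq_card: "grid_count x m n t = card {i \<in> {1..m n}. x n i \<le> t}"
  by (simp add: grid_count_def grid_mset_def filter_mset_image_mset)

lemma grid_count_le_symdiff:
  "grid_count x m n t
     \<le> grid_count x' m' n t + size (mset_symdiff (grid_mset x m n) (grid_mset x' m' n))"
  unfolding grid_count_def by (rule size_filter_mset_le_symdiff)

lemma sorted_grid_le_iff:
  assumes "k \<in> {1..m n}"
  shows "sorted_grid x m n k \<le> t \<longleftrightarrow> k \<le> grid_count x m n t"
proof -
  let ?ys = "sort (map (x n) [1..<m n + 1])"
  have "{1..<m n + 1} = {1..m n}"
    by auto
  then have "mset ?ys = grid_mset x m n"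
    by (simp only: grid_mset_def mset_sort mset_map mset_upt)
  then have "length (filter (\<lambda>y. y \<le> t) ?ys) = grid_count x m n t"
    by (metis grid_count_def mset_filter size_mset)
  moreover have "k - 1 < length ?ys"
    using assms by auto
  ultimately show ?thesis
    using sorted_nth_le_iff_length_filter[of ?ys "k - 1" t] assms
    by (auto simp: sorted_grid_def)
qed

lemma sorted_grid_mem:
  assumes "k \<in> {1..m n}"
  obtains j where "j \<in> {1..m n}" and "sorted_grid x m n k = x n j"
proof -
  let ?ys = "sort (map (x n) [1..<m n + 1])"
  have "?ys ! (k - 1) \<in> set ?ys"
    using assms by (intro nth_mem) auto
  then have "sorted_grid x m n k \<in> x n ` {1..m n}"
    by (auto simp: sorted_grid_def)
  then show ?thesis
    using that by blast
qed

lemma le_grid_count: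
  fixes x :: "nat \<Rightarrow> nat \<Rightarrow> real"
  assumes "0 \<le> h" and grid: "\<forall>i\<in>{1..d n}. \<bar>x n i - (a + real i * h)\<bar> < \<delta>"
    and "j \<le> d n" and "a + real j * h + \<delta> \<le> t"
  shows "j \<le> grid_count x d n t"
proof -
  have "{1..j} \<subseteq> {i \<in> {1..d n}. x n i \<le> t}"
  proof
    fix i assume i: "i \<in> {1..j}"
    then have "real i * h \<le> real j * h"
      using assms(1) by (simp add: mult_right_mono)
    moreover have "\<bar>x n i - (a + real i * h)\<bar> < \<delta>"
      using grid i \<open>j \<le> d n\<close> by auto
    ultimately show "i \<in> {i \<in> {1..d n}. x n i \<le> t}"
      using i \<open>j \<le> d n\<close> assms(4) by (auto simp: abs_less_iff)
  qed
  then have "card {1..j} \<le> card {i \<in> {1..d n}. x n i \<le> t}"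
    by (intro card_mono) auto
  then show ?thesis
    by (simp add: grid_count_eq_card)
qed

lemma grid_count_less:
  fixes x :: "nat \<Rightarrow> nat \<Rightarrow> real"
  assumes "0 \<le> h" and grid: "\<forall>i\<in>{1..d n}. \<bar>x n i - (a + real i * h)\<bar> < \<delta>"
    and "0 < j" and "t \<le> a + real j * h - \<delta>"
  shows "grid_count x d n t < j"
proof -
  have "{i \<in> {1..d n}. x n i \<le> t} \<subseteq> {1..<j}"
  proof
    fix i assume i: "i \<in> {i \<in> {1..d n}. x n i \<le> t}"
    then have "a + real i * h - \<delta> < x n i"
      using grid by fastforce
    with i assms(4) have "real i * h < real j * h"
      by auto
    then have "i < j"
      using \<open>0 \<le> h\<close> by (simp add: mult_less_cancel_right)
    then show "i \<in> {1..<j}"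
      using i by auto
  qed
  then have "card {i \<in> {1..d n}. x n i \<le> t} \<le> card {1..<j}"
    by (intro card_mono) auto
  then show ?thesis
    using \<open>0 < j\<close> by (simp add: grid_count_eq_card)
qed

lemma sorted_grid_upper_bound:
  fixes x x' :: "nat \<Rightarrow> nat \<Rightarrow> real" and D :: nat
  assumes "0 \<le> h" and b: "b = a + real (d n) * h"
    and grid: "\<forall>i\<in>{1..d n}. \<bar>x n i - (a + real i * h)\<bar> < \<delta>"
    and below: "\<forall>i\<in>{1..d' n}. x' n i \<le> b + \<epsilon>"
    and symdiff: "size (mset_symdiff (grid_mset x d n) (grid_mset x' d' n)) \<le> D"
    and k: "k \<in> {1..d' n}"
  shows "sorted_grid x' d' n k \<le> a + real (k + D) * h + max \<delta> \<epsilon>"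
proof (cases "k + D \<le> d n")
  case True
  define t where "t = a + real (k + D) * h + \<delta>"
  have "k + D \<le> grid_count x d n t"
    using le_grid_count[where x = x and d = d and n = n, OF \<open>0 \<le> h\<close> grid True]
    by (simp add: t_def)
  moreover have "grid_count x d n t \<le> grid_count x' d' n t + D"
    using grid_count_le_symdiff[of x d n t x' d'] symdiff by linarith
  ultimately have "sorted_grid x' d' n k \<le> t"
    using sorted_grid_le_iff[where x = x' and m = d' and n = n and t = t, OF k] by linarith
  then show ?thesis
    by (simp add: t_def)
next
  case False
  obtain j where "j \<in> {1..d' n}" and "sorted_grid x' d' n k = x' n j"
    using sorted_grid_mem[where x = x' and m = d' and n = n, OF k] .
  then have "sorted_grid x' d' n k \<le> a + real (d n) * h + \<epsilon>"
    using below b by auto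
  moreover have "real (d n) * h \<le> real (k + D) * h"
    using False \<open>0 \<le> h\<close> by (intro mult_right_mono) auto
  ultimately show ?thesis
    by linarith
qed

lemma sorted_grid_lower_bound:
  fixes x x' :: "nat \<Rightarrow> nat \<Rightarrow> real" and D :: nat
  assumes "0 \<le> h"
    and grid: "\<forall>i\<in>{1..d n}. \<bar>x n i - (a + real i * h)\<bar> < \<delta>"
    and above: "\<forall>i\<in>{1..d' n}. a - \<epsilon> \<le> x' n i"
    and symdiff: "size (mset_symdiff (grid_mset x d n) (grid_mset x' d' n)) \<le> D"
    and k: "k \<in> {1..d' n}"
  shows "a + (real k - real D) * h - max \<delta> \<epsilon> \<le> sorted_grid x' d' n k"
proof (cases "D < k")
  case True
  define t where "t = a + real (k - D) * h - \<delta>"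
  have "grid_count x d n t < k - D"
    using grid_count_less[where x = x and d = d and n = n, OF \<open>0 \<le> h\<close> grid] True
    by (simp add: t_def)
  moreover have "grid_count x' d' n t \<le> grid_count x d n t + D"
    using grid_count_le_symdiff[of x' d' n t x d] symdiff by (simp add: mset_symdiff_commute)
  ultimately have "\<not> sorted_grid x' d' n k \<le> t"
    using sorted_grid_le_iff[where x = x' and m = d' and n = n and t = t, OF k] by linarith
  then show ?thesis
    using True by (simp add: t_def of_nat_diff)
next
  case False
  obtain j where "j \<in> {1..d' n}" and "sorted_grid x' d' n k = x' n j"
    using sorted_grid_mem[where x = x' and m = d' and n = n, OF k] .
  then have "a - \<epsilon> \<le> sorted_grid x' d' n k"
    using above by auto
  moreover have "(real k - real D) * h \<le> 0"
    using False \<open>0 \<le> h\<close> by (simp add: mult_nonpos_nonneg)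
  ultimately show ?thesis
    by linarith
qed

lemma abs_uniform_node_shift_le:
  fixes L :: real and k m m' :: nat
  assumes "0 \<le> L" and "0 < m" and "k \<le> m'"
  shows "\<bar>real k * L / real m - real k * L / real m'\<bar> \<le> \<bar>real m' - real m\<bar> * L / real m"
proof (cases "k = 0")
  case False
  then have "0 < m'"
    using assms(3) by simp
  have "real k * L / real m - real k * L / real m' = real k / real m' * ((real m' - real m) * L / real m)"
    using \<open>0 < m\<close> \<open>0 < m'\<close> by (simp add: field_simps)
  then have "\<bar>real k * L / real m - real k * L / real m'\<bar>
               = real k / real m' * (\<bar>real m' - real m\<bar> * L / real m)"
    using assms(1) by (simp add: abs_mult)
  also have "\<dots> \<le> 1 * (\<bar>real m' - real m\<bar> * L / real m)"
    using assms \<open>0 < m'\<close> by (intro mult_right_mono) auto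
  finally show ?thesis
    by simp
qed (use assms in simp)

lemma sorted_grid_deviation_le:
  fixes x x' :: "nat \<Rightarrow> nat \<Rightarrow> real" and D :: nat
  assumes "a \<le> b" and "0 < d n"
    and grid: "\<forall>i\<in>{1..d n}. \<bar>x n i - (a + real i * (b - a) / real (d n))\<bar> < \<delta>"
    and pts: "\<forall>i\<in>{1..d' n}. x' n i \<in> {a - \<epsilon>..b + \<epsilon>}"
    and symdiff: "size (mset_symdiff (grid_mset x d n) (grid_mset x' d' n)) \<le> D"
    and k: "k \<in> {1..d' n}"
  shows "\<bar>sorted_grid x' d' n k - (a + real k * (b - a) / real (d' n))\<bar>
           \<le> max \<delta> \<epsilon> + 2 * (b - a) * real D / real (d n)"
proof -
  define h where "h = (b - a) / real (d n)"
  have "0 \<le> h" and b: "b = a + real (d n) * h"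
    using assms(1,2) by (simp_all add: h_def)
  have grid_h: "\<forall>i\<in>{1..d n}. \<bar>x n i - (a + real i * h)\<bar> < \<delta>"
    using grid by (simp add: h_def)
  have "\<bar>real k * (b - a) / real (d n) - real k * (b - a) / real (d' n)\<bar>
          \<le> \<bar>real (d' n) - real (d n)\<bar> * (b - a) / real (d n)"
    using assms(1,2) k by (intro abs_uniform_node_shift_le) auto
  also have "\<dots> \<le> real D * (b - a) / real (d n)"
    using abs_grid_size_diff_le_symdiff[of d' n d x x'] symdiff assms(1)
    by (intro divide_right_mono mult_right_mono) auto
  finally have shift: "\<bar>real k * h - real k * (b - a) / real (d' n)\<bar> \<le> real D * h"
    by (simp add: h_def)
  have below: "\<forall>i\<in>{1..d' n}. x' n i \<le> b + \<epsilon>" and above: "\<forall>i\<in>{1..d' n}. a - \<epsilon> \<le> x' n i"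
    using pts by auto
  have upper: "sorted_grid x' d' n k \<le> a + real k * h + real D * h + max \<delta> \<epsilon>"
    using sorted_grid_upper_bound[OF \<open>0 \<le> h\<close> b grid_h below symdiff k]
    by (simp add: distrib_right)
  have lower: "a + real k * h - real D * h - max \<delta> \<epsilon> \<le> sorted_grid x' d' n k"
    using sorted_grid_lower_bound[OF \<open>0 \<le> h\<close> grid_h above symdiff k]
    by (simp add: left_diff_distrib)
  have "2 * (b - a) * real D / real (d n) = 2 * (real D * h)"
    by (simp add: h_def)
  then show ?thesis
    by (intro abs_leI) (use upper lower abs_le_D1[OF shift] abs_le_D2[OF shift] in linarith)+
qed

lemma tendsto_divide_one_if_diff_smallo:
  fixes f g D :: "nat \<Rightarrow> real"
  assumes "\<And>n. \<bar>f n - g n\<bar> \<le> D n" and "D \<in> o(g)"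
    and "\<forall>\<^sub>F n in sequentially. g n \<noteq> 0"
  shows "(\<lambda>n. f n / g n) \<longlonglongrightarrow> 1"
proof -
  have "\<forall>n. norm (f n - g n) \<le> 1 * norm (D n)"
    using assms(1) by (auto intro: order_trans[OF _ abs_ge_self])
  then have "(\<lambda>n. f n - g n) \<in> O(D)"
    by (intro landau_o.bigI[of 1] always_eventually) simp_all
  then have "(\<lambda>n. f n - g n) \<in> o(g)"
    using assms(2) by (rule landau_o.big_small_trans)
  then have "f \<sim>[sequentially] g"
    by (rule smallo_imp_asymp_equiv)
  then show ?thesis
    using assms(3) by (rule asymp_equivD_strong[OF _ eventually_mono]) simp
qed

lemma eventually_sorted_grid_close:
  fixes x x' :: "nat \<Rightarrow> nat \<Rightarrow> real" and d d' :: "nat \<Rightarrow> nat"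
  assumes "a \<le> b" and "0 < e" and grid: "asymp_uniform_grid x d a b"
    and "filterlim d at_top sequentially" and "\<epsilon> \<longlonglongrightarrow> 0"
    and pts: "\<And>n i. i \<in> {1..d' n} \<Longrightarrow> x' n i \<in> {a - \<epsilon> n .. b + \<epsilon> n}"
    and symdiff: "(\<lambda>n. real (size (mset_symdiff (grid_mset x d n) (grid_mset x' d' n))))
                    \<in> o(\<lambda>n. real (d n))"
  shows "\<forall>\<^sub>F n in sequentially. \<forall>k\<in>{1..d' n}.
           \<bar>sorted_grid x' d' n k - (a + real k * (b - a) / real (d' n))\<bar> < e"
proof -
  define D where "D n = size (mset_symdiff (grid_mset x d n) (grid_mset x' d' n))" for n
  have lim: "(\<lambda>n. 2 * (b - a) * real (D n) / real (d n)) \<longlonglongrightarrow> 0"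
    using tendsto_mult_left[OF smalloD_tendsto[OF symdiff], of "2 * (b - a)"]
    unfolding D_def by (simp only: times_divide_eq_right mult_zero_right)
  have "\<forall>\<^sub>F n in sequentially. 2 * (b - a) * real (D n) / real (d n) < e / 2"
    using order_tendstoD(2)[OF lim, of "e / 2"] \<open>0 < e\<close> by simp
  moreover have "\<forall>\<^sub>F n in sequentially.
      \<forall>i\<in>{1..d n}. \<bar>x n i - (a + real i * (b - a) / real (d n))\<bar> < e / 2"
    using grid[unfolded asymp_uniform_grid_def, rule_format, of "e / 2"] \<open>0 < e\<close> by simp
  moreover have "\<forall>\<^sub>F n in sequentially. \<epsilon> n < e / 2"
    using order_tendstoD(2)[OF \<open>\<epsilon> \<longlonglongrightarrow> 0\<close>, of "e / 2"] \<open>0 < e\<close> by simp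
  moreover have "\<forall>\<^sub>F n in sequentially. 0 < d n"
    using eventually_compose_filterlim[OF eventually_gt_at_top assms(4)] .
  ultimately show ?thesis
  proof eventually_elim
    case (elim n)
    show ?case
    proof
      fix k assume k: "k \<in> {1..d' n}"
      have "\<forall>i\<in>{1..d' n}. x' n i \<in> {a - \<epsilon> n..b + \<epsilon> n}"
        using pts by blast
      from sorted_grid_deviation_le[where x = x and d = d and x' = x' and d' = d' and n = n,
          OF \<open>a \<le> b\<close> elim(4) elim(2) this order_refl k, folded D_def]
      have "\<bar>sorted_grid x' d' n k - (a + real k * (b - a) / real (d' n))\<bar>
              \<le> max (e / 2) (\<epsilon> n) + 2 * (b - a) * real (D n) / real (d n)" .
      moreover have "max (e / 2) (\<epsilon> n) = e / 2"
        using elim(3) by simp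
      ultimately show "\<bar>sorted_grid x' d' n k - (a + real k * (b - a) / real (d' n))\<bar> < e"
        using elim(1) by linarith
    qed
  qed
qed

lemma asymp_uniform_grid_sorted_grid:
  fixes x x' :: "nat \<Rightarrow> nat \<Rightarrow> real" and d d' :: "nat \<Rightarrow> nat"
  assumes "asymp_uniform_grid x d a b"
    and "filterlim d at_top sequentially" and "\<epsilon> \<longlonglongrightarrow> 0"
    and pts: "\<And>n i. i \<in> {1..d' n} \<Longrightarrow> x' n i \<in> {a - \<epsilon> n .. b + \<epsilon> n}"
    and "(\<lambda>n. real (size (mset_symdiff (grid_mset x d n) (grid_mset x' d' n))))
           \<in> o(\<lambda>n. real (d n))"
  shows "asymp_uniform_grid (sorted_grid x' d') d' a b"
  unfolding asymp_uniform_grid_def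
proof (intro allI impI)
  fix e :: real
  assume "0 < e"
  show "\<forall>\<^sub>F n in sequentially. \<forall>k\<in>{1..d' n}.
          \<bar>sorted_grid x' d' n k - (a + real k * (b - a) / real (d' n))\<bar> < e"
  proof (cases "a \<le> b")
    case True
    show ?thesis
      by (rule eventually_sorted_grid_close[OF True \<open>0 < e\<close> assms])
  next
    case False
    have "\<forall>\<^sub>F n in sequentially. \<epsilon> n < (a - b) / 2"
      using order_tendstoD(2)[OF \<open>\<epsilon> \<longlonglongrightarrow> 0\<close>, of "(a - b) / 2"] False by simp
    then show ?thesis
    proof (rule eventually_mono)
      fix n assume "\<epsilon> n < (a - b) / 2"
      then have "{1..d' n} = {}"
        using pts[of _ n] by fastforce
      then show "\<forall>k\<in>{1..d' n}. \<bar>sorted_grid x' d' n k - (a + real k * (b - a) / real (d' n))\<bar> < e"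
        by simp
    qed
  qed
qed

theorem lemma3p11:
  fixes x x' :: "nat \<Rightarrow> nat \<Rightarrow> real" and d d' :: "nat \<Rightarrow> nat" and a b :: real
    and \<epsilon> :: "nat \<Rightarrow> real"
  assumes "asymp_uniform_grid x d a b"
    and "filterlim d at_top sequentially"
    and "\<epsilon> \<longlonglongrightarrow> 0"
    and "\<And>n i. i \<in> {1..d' n} \<Longrightarrow> x' n i \<in> {a - \<epsilon> n .. b + \<epsilon> n}"
    and "(\<lambda>n. real (size (mset_symdiff (grid_mset x d n) (grid_mset x' d' n))))
           \<in> o(\<lambda>n. real (d n))"
  shows "((\<lambda>n. real (d' n) / real (d n)) \<longlonglongrightarrow> 1)
         \<and> asymp_uniform_grid (sorted_grid x' d') d' a b"
proof
  have "\<forall>\<^sub>F n in sequentially. real (d n) \<noteq> 0"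
    using eventually_compose_filterlim[OF eventually_gt_at_top assms(2)] by simp
  then show "(\<lambda>n. real (d' n) / real (d n)) \<longlonglongrightarrow> 1"
    by (rule tendsto_divide_one_if_diff_smallo[OF abs_grid_size_diff_le_symdiff assms(5)])
  show "asymp_uniform_grid (sorted_grid x' d') d' a b"
    by (rule asymp_uniform_grid_sorted_grid[OF assms])
qed

end
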